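(* Let $\mathcal{G}$ be an additive arithmetical semigroup satisfying Axiom $A^{\#}$ (constants $c_{\mathcal{G}}>0$, $q>1$) with $Z_{\mathcal{G}}(-q^{-1})\ne0$ and norm $\|g\|=q^{\partial(g)}$, and let $R(n,m)=\sum_{0\le\partial(g)\le n,\ d_-(g)>m}\mu(g)/\|g\|$. There is a constant $0\le\eta<1$ depending only on $\mathcal{G}$ such that for every $\varepsilon>0$, $$R(n,m)\ll_{\varepsilon} q^{(\eta-1+\varepsilon)n}$$ for all sufficiently large $n$ and all integers $0\le m\le\log\log n$.
   Context: An additive arithmetical semigroup is a commutative monoid $\mathcal{G}$ (written additively, identity $e_{\mathcal{G}}$) freely generated by a countable set $\mathcal{P}$ of primes, with an additive degree map $\partial\colon\mathcal{G}\to\mathbb{Z}_{\ge0}$, $\partial(e_{\mathcal{G}})=0$, $\partial(P)>0$ for primes, finitely many elements of each degree. Axiom $A^{\#}$: $\#\{g:\partial(g)=n\}=c_{\mathcal{G}}q^n+O(q^{\eta_0 n})$ for some $0\le\eta_0<1$. $Z_{\mathcal{G}}(z)=\prod_P(1-z^{\partial(P)})^{-1}$ (meromorphically continued). $P\mid g$ means $g=P+r$. $d_-(g)=\min\{\partial(P):P\mid g\}$ for $g\ne e_{\mathcal{G}}$, and $e_{\mathcal{G}}$ is included in the sum defining $R(n,m)$ (convention $d_-(e_{\mathcal{G}})=\infty$). $\mu$ is the Möbius function on $\mathcal{G}$. *)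

theory Defs
  imports "HOL-Analysis.Analysis" "HOL-Library.Multiset" "HOL-Library.Extended_Nat"
begin

text \<open>An additive arithmetical semigroup is modelled (up to isomorphism) as the free
commutative monoid of finite multisets over a type of primes \<open>'p\<close>, with a degree
function \<open>deg\<close> on primes extended additively.\<close>

definition degG :: "('p \<Rightarrow> nat) \<Rightarrow> 'p multiset \<Rightarrow> nat" where
  "degG deg g = sum_mset (image_mset deg g)"

definition arith_semigroup :: "('p \<Rightarrow> nat) \<Rightarrow> bool" where
  "arith_semigroup deg \<longleftrightarrow> (\<forall>p. deg p > 0) \<and> (\<forall>n. finite {g :: 'p multiset. degG deg g = n})"

definition G_count :: "('p \<Rightarrow> nat) \<Rightarrow> nat \<Rightarrow> nat" where
  "G_count deg n = card {g :: 'p multiset. degG deg g = n}"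

definition axiom_A_sharp :: "('p \<Rightarrow> nat) \<Rightarrow> real \<Rightarrow> real \<Rightarrow> bool" where
  "axiom_A_sharp deg c q \<longleftrightarrow>
     (\<exists>\<eta>0 C. 0 \<le> \<eta>0 \<and> \<eta>0 < 1 \<and>
        (\<forall>n. \<bar>real (G_count deg n) - c * q ^ n\<bar> \<le> C * q powr (\<eta>0 * real n)))"

text \<open>Z_G(z) = prod_P (1 - z^deg P)^(-1) = sum_n G(n) z^n for |z| < 1/q.\<close>
definition Z_series :: "('p \<Rightarrow> nat) \<Rightarrow> complex \<Rightarrow> complex" where
  "Z_series deg z = (\<Sum>n. of_nat (G_count deg n) * z ^ n)"

text \<open>The (meromorphic) continuation of Z_G, from the disc of convergence |z| < 1/q,
  takes a nonzero value at w: some holomorphic function on a connected open set containing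
  the disc and w agrees with Z_G on the disc and is nonzero at w (this value is independent
  of the choice of continuation by the identity theorem).\<close>
definition Z_cont_nonzero_at :: "('p \<Rightarrow> nat) \<Rightarrow> real \<Rightarrow> complex \<Rightarrow> bool" where
  "Z_cont_nonzero_at deg q w \<longleftrightarrow>
     (\<exists>S F. open S \<and> connected S \<and> ball 0 (1 / q) \<subseteq> S \<and> w \<in> S \<and> F holomorphic_on S \<and>
        (\<forall>z\<in>ball 0 (1 / q). F z = Z_series deg z) \<and> F w \<noteq> 0)"

definition mobiusG :: "'p multiset \<Rightarrow> int" where
  "mobiusG g = (if \<forall>p. count g p \<le> 1 then (-1) ^ size g else 0)"

definition d_minus :: "('p \<Rightarrow> nat) \<Rightarrow> 'p multiset \<Rightarrow> enat" where
  "d_minus deg g = (if g = {#} then \<infinity> else enat (Min (deg ` set_mset g)))"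

definition normG :: "('p \<Rightarrow> nat) \<Rightarrow> real \<Rightarrow> 'p multiset \<Rightarrow> real" where
  "normG deg q g = q ^ degG deg g"

definition R_sum :: "('p \<Rightarrow> nat) \<Rightarrow> real \<Rightarrow> nat \<Rightarrow> nat \<Rightarrow> real" where
  "R_sum deg q n m =
     (\<Sum>g\<in>{g :: 'p multiset. degG deg g \<le> n \<and> d_minus deg g > enat m}.
        real_of_int (mobiusG g) / normG deg q g)"

end

theory Submission
  imports Defs "HOL-Complex_Analysis.Complex_Analysis" "HOL-Real_Asymp.Real_Asymp"
begin

text \<open>
  Let M(n) be the sum of the Moebius function over the elements of degree n, so that
  sum M(n) z^n = 1 / Z(z). Axiom A-sharp gives Z(z) = W(z) / (1 - q z), where
  W(z) = c + (1 - q z) E(z) is holomorphic on the disc of radius q^(-eta0) > 1/q.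
  W has no zero on the closed disc of radius 1/q: inside, Z = exp (sum Lambda(n) z^n / n) is nonzero;
  W(1/q) = c; at -1/q this is the hypothesis on the continuation of Z; and at any other point
  w/q of the circle a zero would contradict Mertens' inequality |Z(r)|^3 |Z(r w)|^4 |Z(r w^2)| >= 1.
  Hence (1 - q z) / W(z) = sum M(n) z^n is holomorphic on a disc of radius 1/(q t) with t < 1,
  so M(n) = O((q t)^n), and it vanishes at z = 1/q, so sum M(n) q^(-n) = 0.

  Sieving out the primes of degree at most m by Moebius inversion,
  R(n, m) = sum_(j <= n) b(j) q^(-j) sum_(i <= n - j) M(i) q^(-i), where b(j) counts the elements
  of degree j all of whose prime factors have degree at most m. The inner sums are tails of a
  series with sum 0, hence O(t^(n - j)), and sum_(j <= n) b(j) <= (n + 1)^k, where the number k of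
  primes of degree at most m is O(m q^m) = O(log log n (log n)^(log q)) = o(n / log n) for
  m <= log log n. Thus R(n, m) = O(t^n q^(eps n)), which is the claim with eta = 1 + log_q t.
\<close>

lemma sum_minus_one_power_card_between:
  assumes "finite D" and "finite E" and "D \<inter> E = {}"
  shows "(\<Sum>H | D \<subseteq> H \<and> H \<subseteq> D \<union> E. (-1::real) ^ card H) = (if E = {} then (-1) ^ card D else 0)"
proof -
  have "{H. D \<subseteq> H \<and> H \<subseteq> D \<union> E} = (\<lambda>H'. D \<union> H') ` Pow E"
  proof (intro equalityI subsetI)
    fix H assume "H \<in> {H. D \<subseteq> H \<and> H \<subseteq> D \<union> E}"
    then have "H = D \<union> (H \<inter> E)" "H \<inter> E \<in> Pow E"
      by auto
    then show "H \<in> (\<lambda>H'. D \<union> H') ` Pow E"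
      by blast
  qed auto
  moreover have "inj_on (\<lambda>H'. D \<union> H') (Pow E)"
    using assms(3) by (auto simp: inj_on_def)
  moreover have "card (D \<union> H') = card D + card H'" if "H' \<subseteq> E" for H'
    using that assms by (intro card_Un_disjoint) (auto intro: finite_subset)
  ultimately have "(\<Sum>H | D \<subseteq> H \<and> H \<subseteq> D \<union> E. (-1::real) ^ card H) =
      (-1) ^ card D * (\<Sum>H'\<in>Pow E. (-1) ^ card H')"
    by (simp add: sum.reindex power_add sum_distrib_left)
  also have "(\<Sum>H'\<in>Pow E. (-1::real) ^ card H') = (if E = {} then 1 else 0)"
  proof (cases "E = {}")
    case False
    then have "card {H'. H' \<in> Pow E \<and> even (card H')} = card {H'. H' \<in> Pow E \<and> odd (card H')}"
      using card_subsupersets_even_odd[OF assms(2), of "{}"] by auto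
    then show ?thesis
      using False by (simp add: sum_alternating_cancels assms(2))
  qed simp
  finally show ?thesis
    by simp
qed

lemma sum_triangle_swap:
  fixes h :: "nat \<Rightarrow> nat \<Rightarrow> 'a :: comm_monoid_add"
  shows "(\<Sum>k\<le>n. \<Sum>i\<le>k. h i (k - i)) = (\<Sum>j\<le>n. \<Sum>i\<le>n - j. h i j)"
proof -
  have "(\<Sum>k\<le>n. \<Sum>i\<le>k. h i (k - i)) = (\<Sum>(k, i)\<in>(SIGMA k:{..n}. {..k}). h i (k - i))"
    by (rule sum.Sigma) auto
  also have "\<dots> = (\<Sum>(j, i)\<in>(SIGMA j:{..n}. {..n - j}). h i j)"
    by (rule sum.reindex_bij_witness[where j = "\<lambda>(k, i). (k - i, i)" and i = "\<lambda>(j, i). (i + j, i)"])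
      auto
  also have "\<dots> = (\<Sum>j\<le>n. \<Sum>i\<le>n - j. h i j)"
    by (rule sum.Sigma[symmetric]) auto
  finally show ?thesis .
qed

lemma abs_partial_sum_le_if_sums_zero:
  fixes f :: "nat \<Rightarrow> real"
  assumes "f sums 0" and bound: "\<And>i. \<bar>f i\<bar> \<le> B * t ^ i" and "0 \<le> t" "t < 1"
  shows "\<bar>\<Sum>i\<le>N. f i\<bar> \<le> B * t / (1 - t) * t ^ N"
proof -
  have geometric: "summable (\<lambda>i. B * t ^ Suc N * t ^ i)"
    using assms by (intro summable_mult summable_geometric) simp
  have "(\<lambda>i. f (i + Suc N)) sums (0 - (\<Sum>i<Suc N. f i))"
    using sums_split_initial_segment[OF assms(1)] .
  then have "\<bar>\<Sum>i\<le>N. f i\<bar> = \<bar>\<Sum>i. f (i + Suc N)\<bar>"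
    by (simp add: sums_iff lessThan_Suc_atMost)
  also have "\<dots> \<le> (\<Sum>i. B * t ^ Suc N * t ^ i)"
  proof (rule norm_suminf_le[of "\<lambda>i. f (i + Suc N)", OF _ geometric, unfolded real_norm_def])
    fix i
    show "\<bar>f (i + Suc N)\<bar> \<le> B * t ^ Suc N * t ^ i"
      using bound[of "i + Suc N"] by (simp add: power_add mult_ac)
  qed
  also have "\<dots> = B * t ^ Suc N * (1 / (1 - t))"
    by (rule sums_unique[symmetric]) (use assms in \<open>intro sums_mult geometric_sums, simp\<close>)
  also have "\<dots> = B * t / (1 - t) * t ^ N"
    by simp
  finally show ?thesis .
qed

lemma fps_conv_radius_ge_if_geometric_bound:
  fixes a :: "nat \<Rightarrow> complex"
  assumes "\<And>n. norm (a n) \<le> K * b ^ n" and "b > 0"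
  shows "fps_conv_radius (Abs_fps a) \<ge> ereal (1 / b)"
  unfolding fps_conv_radius_def
proof (rule conv_radius_geI_ex')
  fix r :: real assume r: "0 < r" "ereal r < ereal (1 / b)"
  then have "b * r < 1"
    using assms(2) by (simp add: field_simps)
  then have "summable (\<lambda>n. K * (b * r) ^ n)"
    using r assms(2) by (intro summable_mult summable_geometric) simp
  then show "summable (\<lambda>n. fps_nth (Abs_fps a) n * of_real r ^ n)"
  proof (rule summable_comparison_test'[where N = 0])
    fix n
    have "norm (a n * of_real r ^ n) \<le> K * b ^ n * r ^ n"
      using assms(1)[of n] r by (simp add: norm_mult norm_power mult_right_mono)
    then show "norm (fps_nth (Abs_fps a) n * of_real r ^ n) \<le> K * (b * r) ^ n"
      by (simp add: power_mult_distrib mult_ac)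
  qed
qed

lemma norm_less_fps_conv_radius:
  "norm z < r \<Longrightarrow> ereal r \<le> fps_conv_radius F \<Longrightarrow> ereal (norm z) < fps_conv_radius F"
  by (rule less_le_trans[of _ "ereal r"]) simp_all

text \<open>Mertens' trick: \<open>3 + 4 cos \<theta> + cos 2\<theta> = 2 (1 + cos \<theta>)\<^sup>2 \<ge> 0\<close>.\<close>
lemma three_four_one_nonneg:
  fixes w :: complex
  assumes "norm w = 1"
  shows "0 \<le> 3 + 4 * Re w + Re (w ^ 2)"
proof -
  have "(Re w)\<^sup>2 + (Im w)\<^sup>2 = 1"
    using assms cmod_power2[of w] by simp
  moreover have "0 \<le> (1 + Re w)\<^sup>2"
    by simp
  ultimately show ?thesis
    unfolding Re_power2 by (simp add: power2_eq_square algebra_simps)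
qed

lemma tendsto_ray_difference_quotient:
  fixes f :: "complex \<Rightarrow> complex"
  assumes "(f has_field_derivative D) (at (of_real s * \<omega>))" and "\<omega> \<noteq> 0"
  shows "((\<lambda>r. (f (of_real r * \<omega>) - f (of_real s * \<omega>)) / of_real (r - s)) \<longlongrightarrow> \<omega> * D) (at s)"
proof -
  define z where "z = of_real s * \<omega>"
  have quotient: "((\<lambda>y. (f y - f z) / (y - z)) \<longlongrightarrow> D) (at z)"
    using assms(1) unfolding z_def has_field_derivative_iff .
  have "filterlim (\<lambda>r. of_real r * \<omega>) (at z) (at s)"
  proof (rule filterlim_atI)
    show "((\<lambda>r. of_real r * \<omega>) \<longlongrightarrow> z) (at s)"
      unfolding z_def by (intro tendsto_intros)
    show "\<forall>\<^sub>F r in at s. of_real r * \<omega> \<noteq> z"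
      using assms(2) by (simp add: z_def eventually_at_filter)
  qed
  then have "((\<lambda>r. \<omega> * ((f (of_real r * \<omega>) - f z) / (of_real r * \<omega> - z))) \<longlongrightarrow> \<omega> * D) (at s)"
    by (intro tendsto_mult_left filterlim_compose[OF quotient])
  moreover have "\<omega> * ((f (of_real r * \<omega>) - f z) / (of_real r * \<omega> - z)) =
      (f (of_real r * \<omega>) - f z) / of_real (r - s)" for r
  proof (cases "r = s")
    case False
    have cancel: "\<omega> * (x / (c * \<omega>)) = x / c" if "c \<noteq> 0" for x c :: complex
      using assms(2) that by (simp add: field_simps)
    have "of_real r * \<omega> - z = of_real (r - s) * \<omega>"
      by (simp add: z_def algebra_simps)
    with False assms(2) show ?thesis
      by (simp add: cancel)
  qed (simp add: z_def)
  ultimately show ?thesis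
    unfolding z_def by simp
qed

section \<open>Multisets of primes\<close>

lemma degG_empty [simp]: "degG deg {#} = 0"
  by (simp add: degG_def)

lemma degG_add [simp]: "degG deg (g + h) = degG deg g + degG deg h"
  by (simp add: degG_def)

lemma degG_add_mset [simp]: "degG deg (add_mset p g) = deg p + degG deg g"
  by (simp add: degG_def)

lemma degG_mono: "h \<subseteq># g \<Longrightarrow> degG deg h \<le> degG deg g"
  by (metis degG_add le_add1 subset_mset.le_iff_add)

lemma degG_diff: "h \<subseteq># g \<Longrightarrow> degG deg (g - h) = degG deg g - degG deg h"
  by (metis add_diff_cancel_left' degG_add subset_mset.add_diff_inverse)

lemma finite_submultisets: "finite {h. h \<subseteq># g}"
proof (rule finite_subset)
  show "{h. h \<subseteq># g} \<subseteq> (\<Union>n\<le>size g. multisets_of_size (set_mset g) n)"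
    by (auto simp: multisets_of_size_def dest: mset_subset_eqD size_mset_mono)
qed auto

lemma mset_set_set_mset_if_count_le_1:
  assumes "\<forall>p. count h p \<le> 1"
  shows "mset_set (set_mset h) = h"
proof (rule multiset_eqI)
  fix p
  show "count (mset_set (set_mset h)) p = count h p"
  proof (cases "p \<in># h")
    case True
    then have "0 < count h p"
      by simp
    then have "count h p = 1"
      using assms by (simp add: le_antisym Suc_le_eq del: count_greater_zero_iff)
    with True show ?thesis
      by (simp add: count_mset_set')
  qed (simp add: not_in_iff)
qed

lemma mobiusG_if_count_le_1:
  assumes "\<forall>p. count g p \<le> 1"
  shows "mobiusG g = (-1) ^ card (set_mset g)"
proof -
  have "size g = card (set_mset g)"
    by (metis mset_set_set_mset_if_count_le_1[OF assms] size_mset_set)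
  with assms show ?thesis
    by (simp add: mobiusG_def)
qed

lemma mobiusG_empty [simp]: "mobiusG {#} = 1"
  by (simp add: mobiusG_def)

lemma sum_mobiusG_submultisets:
  "(\<Sum>h | h \<subseteq># g \<and> P h. real_of_int (mobiusG h)) =
   (\<Sum>H | H \<subseteq> set_mset g \<and> P (mset_set H). (-1) ^ card H)"
proof -
  have "(\<Sum>h | h \<subseteq># g \<and> P h. real_of_int (mobiusG h)) =
        (\<Sum>h | h \<subseteq># g \<and> P h \<and> (\<forall>p. count h p \<le> 1). real_of_int (mobiusG h))"
    by (rule sum.mono_neutral_right)
      (auto simp: mobiusG_def intro: finite_subset[OF _ finite_submultisets])
  also have "\<dots> = (\<Sum>H | H \<subseteq> set_mset g \<and> P (mset_set H). (-1) ^ card H)"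
  proof (rule sum.reindex_bij_witness[of _ mset_set set_mset])
    fix H assume H: "H \<in> {H. H \<subseteq> set_mset g \<and> P (mset_set H)}"
    then have "finite H"
      using finite_subset by auto
    with H show "set_mset (mset_set H) = H"
      and "mset_set H \<in> {h. h \<subseteq># g \<and> P h \<and> (\<forall>p. count h p \<le> 1)}"
      by (auto simp: subseteq_mset_def count_mset_set')
  next
    fix h assume h: "h \<in> {h. h \<subseteq># g \<and> P h \<and> (\<forall>p. count h p \<le> 1)}"
    then have sqf: "mset_set (set_mset h) = h"
      by (simp add: mset_set_set_mset_if_count_le_1)
    then show "mset_set (set_mset h) = h" .
    show "set_mset h \<in> {H. H \<subseteq> set_mset g \<and> P (mset_set H)}"
      using h sqf by (auto dest: mset_subset_eqD)
    show "(-1) ^ card (set_mset h) = real_of_int (mobiusG h)"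
      using h by (simp add: mobiusG_if_count_le_1)
  qed
  finally show ?thesis .
qed

lemma set_mset_diff_mset_set_subset_iff:
  assumes "H \<subseteq> set_mset g"
  shows "set_mset (g - mset_set H) \<subseteq> S \<longleftrightarrow> (\<forall>p \<in> set_mset g - S. p \<in> H \<and> count g p = 1)"
proof -
  have "finite H"
    using assms finite_subset by blast
  then have mem: "p \<in># g - mset_set H \<longleftrightarrow> (if p \<in> H then 1 else 0) < count g p" for p
    by (simp add: in_diff_count count_mset_set')
  show ?thesis
  proof
    assume L: "set_mset (g - mset_set H) \<subseteq> S"
    show "\<forall>p \<in> set_mset g - S. p \<in> H \<and> count g p = 1"
    proof
      fix p assume p: "p \<in> set_mset g - S"
      then have "\<not> (if p \<in> H then 1 else 0) < count g p"
        using L mem by blast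
      moreover have "0 < count g p"
        using p by simp
      ultimately show "p \<in> H \<and> count g p = 1"
        by (cases "p \<in> H") (simp_all del: count_greater_zero_iff)
    qed
  next
    assume R: "\<forall>p \<in> set_mset g - S. p \<in> H \<and> count g p = 1"
    show "set_mset (g - mset_set H) \<subseteq> S"
    proof
      fix p assume p: "p \<in># g - mset_set H"
      then have less: "(if p \<in> H then 1 else 0) < count g p"
        by (simp add: mem)
      show "p \<in> S"
      proof (rule ccontr)
        assume "p \<notin> S"
        with R p have "p \<in> H" "count g p = 1"
          by (auto dest: in_diffD)
        with less show False
          by simp
      qed
    qed
  qed
qed

lemma sum_mobiusG_smooth_cofactor:
  "(\<Sum>h | h \<subseteq># g \<and> set_mset (g - h) \<subseteq> S. real_of_int (mobiusG h)) =
   (if set_mset g \<inter> S = {} then real_of_int (mobiusG g) else 0)"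
proof -
  define D where "D = set_mset g - S"
  define E where "E = set_mset g \<inter> S"
  have sum_eq: "(\<Sum>h | h \<subseteq># g \<and> set_mset (g - h) \<subseteq> S. real_of_int (mobiusG h)) =
      (\<Sum>H | H \<subseteq> set_mset g \<and> (\<forall>p\<in>D. p \<in> H \<and> count g p = 1). (-1) ^ card H)"
    unfolding sum_mobiusG_submultisets D_def
    by (intro sum.cong Collect_cong refl conj_cong) (simp_all add: set_mset_diff_mset_set_subset_iff)
  show ?thesis
  proof (cases "\<forall>p\<in>D. count g p = 1")
    case False
    then have no_subsets: "{H. H \<subseteq> set_mset g \<and> (\<forall>p\<in>D. p \<in> H \<and> count g p = 1)} = {}"
      by auto
    obtain p where "p \<in> D" "count g p \<noteq> 1"
      using False by blast
    then have "\<not> count g p \<le> 1"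
      by (auto simp: D_def simp del: count_greater_zero_iff dest: count_greater_zero_iff[THEN iffD2])
    then have "mobiusG g = 0"
      by (auto simp: mobiusG_def)
    then show ?thesis
      unfolding sum_eq no_subsets by simp
  next
    case True
    then have "{H. H \<subseteq> set_mset g \<and> (\<forall>p\<in>D. p \<in> H \<and> count g p = 1)} = {H. D \<subseteq> H \<and> H \<subseteq> D \<union> E}"
      by (auto simp: D_def E_def)
    moreover have "finite D" "finite E" "D \<inter> E = {}"
      by (auto simp: D_def E_def)
    ultimately have "(\<Sum>h | h \<subseteq># g \<and> set_mset (g - h) \<subseteq> S. real_of_int (mobiusG h)) =
        (if E = {} then (-1) ^ card D else 0)"
      by (simp add: sum_eq sum_minus_one_power_card_between)
    also have "\<dots> = (if set_mset g \<inter> S = {} then real_of_int (mobiusG g) else 0)"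
    proof (cases "E = {}")
      case True
      then have "D = set_mset g"
        by (auto simp: D_def E_def)
      moreover have "\<forall>p. count g p \<le> 1"
        using \<open>\<forall>p\<in>D. count g p = 1\<close> \<open>D = set_mset g\<close> by (metis count_inI le_refl zero_le)
      ultimately show ?thesis
        using True by (simp add: mobiusG_if_count_le_1 E_def)
    qed (simp add: E_def)
    finally show ?thesis .
  qed
qed

definition mangoldtG :: "('p \<Rightarrow> nat) \<Rightarrow> 'p multiset \<Rightarrow> real" where
  "mangoldtG deg h = (if is_singleton (set_mset h) then real (deg (the_elem (set_mset h))) else 0)"

lemma mangoldtG_nonneg: "mangoldtG deg h \<ge> 0"
  by (simp add: mangoldtG_def)

lemma mangoldtG_le_degG: "mangoldtG deg h \<le> real (degG deg h)"
proof (cases "is_singleton (set_mset h)")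
  case True
  then obtain P where P: "set_mset h = {P}"
    by (auto simp: is_singleton_def)
  then obtain h' where "h = add_mset P h'"
    by (metis insertI1 multi_member_split)
  moreover have "mangoldtG deg h = real (deg P)"
    using P by (simp add: mangoldtG_def)
  ultimately show ?thesis
    by simp
qed (simp add: mangoldtG_def)

lemma mangoldtG_replicate_mset: "k > 0 \<Longrightarrow> mangoldtG deg (replicate_mset k p) = real (deg p)"
  by (simp add: mangoldtG_def)

lemma replicate_mset_if_set_mset_eq_singleton:
  "set_mset h = {P} \<Longrightarrow> h = replicate_mset (count h P) P"
  by (rule multiset_eqI) (auto simp: not_in_iff[symmetric])

lemma prime_power_submultiset_add_mset:
  assumes "h \<subseteq># add_mset a g" and "\<not> h \<subseteq># g" and "set_mset h = {P}"
  shows "h = replicate_mset (Suc (count g a)) a"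
proof -
  from assms(1) have le: "count h x \<le> count (add_mset a g) x" for x
    by (simp add: subseteq_mset_def)
  from assms(2) obtain x where x: "count g x < count h x"
    by (auto simp: subseteq_mset_def not_le)
  then have "x = P"
    using assms(3) by (metis count_inI insertCI less_nat_zero_code singletonD)
  moreover have "x = a"
    using le[of x] x by (cases "x = a") auto
  ultimately have "h = replicate_mset (count h a) a"
    using replicate_mset_if_set_mset_eq_singleton[OF assms(3)] by simp
  also have "count h a = Suc (count g a)"
    using le[of a] x \<open>x = a\<close> by simp
  finally show ?thesis .
qed

lemma sum_mangoldtG_submultisets: "(\<Sum>h | h \<subseteq># g. mangoldtG deg h) = real (degG deg g)"
proof (induction g)
  case empty
  have "{h. h \<subseteq># {#}} = {{#}}"
    by auto
  then show ?case
    by (simp add: mangoldtG_def is_singleton_def)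
next
  case (add a g)
  define top where "top = replicate_mset (Suc (count g a)) a"
  define B where "B = {h. h \<subseteq># add_mset a g \<and> \<not> h \<subseteq># g}"
  have split: "{h. h \<subseteq># add_mset a g} = {h. h \<subseteq># g} \<union> B"
    by (auto simp: B_def intro: subset_mset.order_trans)
  have "finite B"
    unfolding B_def by (rule finite_subset[OF _ finite_submultisets[of "add_mset a g"]]) auto
  have "top \<in> B"
    by (auto simp: B_def top_def subseteq_mset_def)
  have vanish: "mangoldtG deg h = 0" if "h \<in> B" "h \<noteq> top" for h
  proof (rule ccontr)
    assume "mangoldtG deg h \<noteq> 0"
    then obtain P where "set_mset h = {P}"
      by (auto simp: mangoldtG_def is_singleton_def split: if_splits)
    with that show False
      using prime_power_submultiset_add_mset[of h a g P] by (auto simp: B_def top_def)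
  qed
  have "(\<Sum>h\<in>B. mangoldtG deg h) = mangoldtG deg top + (\<Sum>h\<in>B - {top}. mangoldtG deg h)"
    by (rule sum.remove[OF \<open>finite B\<close> \<open>top \<in> B\<close>])
  also have "(\<Sum>h\<in>B - {top}. mangoldtG deg h) = 0"
    using vanish by (intro sum.neutral) auto
  also have "mangoldtG deg top + 0 = real (deg a)"
    by (simp add: top_def mangoldtG_replicate_mset del: replicate_mset_Suc)
  finally have "(\<Sum>h\<in>B. mangoldtG deg h) = real (deg a)" .
  moreover have "{h. h \<subseteq># g} \<inter> B = {}"
    by (auto simp: B_def)
  ultimately show ?case
    using add.IH \<open>finite B\<close> by (simp add: split sum.union_disjoint finite_submultisets)
qed

lemma d_minus_gt_iff: "d_minus deg g > enat m \<longleftrightarrow> set_mset g \<inter> {P. deg P \<le> m} = {}"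
proof (cases "g = {#}")
  case False
  then have "m < Min (deg ` set_mset g) \<longleftrightarrow> (\<forall>P\<in>set_mset g. m < deg P)"
    by simp
  with False show ?thesis
    by (auto simp: d_minus_def)
qed (simp add: d_minus_def)

section \<open>Counting functions of an arithmetical semigroup\<close>

locale additive_arith_semigroup =
  fixes deg :: "'p \<Rightarrow> nat"
  assumes arith_semigroup: "arith_semigroup deg"
begin

lemma deg_pos: "deg p > 0"
  using arith_semigroup by (simp add: arith_semigroup_def)

lemma finite_degG_eq: "finite {g. degG deg g = n}"
  using arith_semigroup by (simp add: arith_semigroup_def)

lemma finite_degG_le: "finite {g. degG deg g \<le> n}"
proof -
  have "{g. degG deg g \<le> n} = (\<Union>i\<le>n. {g. degG deg g = i})"
    by auto
  then show ?thesis
    by (simp add: finite_degG_eq)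
qed

lemma size_le_degG: "size g \<le> degG deg g"
proof (induction g)
  case (add p g)
  then show ?case
    using deg_pos[of p] by simp
qed simp

lemma degG_eq_0_iff: "degG deg g = 0 \<longleftrightarrow> g = {#}"
  using size_le_degG[of g] by auto

lemma degG_eq_0_set: "{g. degG deg g = 0} = {{#}}"
  using degG_eq_0_iff by auto

lemma sum_degG_eq_convolution:
  fixes f u :: "'p multiset \<Rightarrow> real"
  shows "(\<Sum>g | degG deg g = n. \<Sum>h | h \<subseteq># g. f h * u (g - h)) =
         (\<Sum>i\<le>n. (\<Sum>h | degG deg h = i. f h) * (\<Sum>k | degG deg k = n - i. u k))"
proof -
  have "(\<Sum>g | degG deg g = n. \<Sum>h | h \<subseteq># g. f h * u (g - h)) =
        (\<Sum>(g, h)\<in>(SIGMA g:{g. degG deg g = n}. {h. h \<subseteq># g}). f h * u (g - h))"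
    by (rule sum.Sigma) (auto simp: finite_degG_eq finite_submultisets)
  also have "\<dots> = (\<Sum>(h, k)\<in>(SIGMA h:{h. degG deg h \<le> n}. {k. degG deg k = n - degG deg h}). f h * u k)"
    by (rule sum.reindex_bij_witness[where i = "\<lambda>(h, k). (h + k, h)" and j = "\<lambda>(g, h). (h, g - h)"])
      (auto simp: degG_mono degG_diff)
  also have "\<dots> = (\<Sum>h | degG deg h \<le> n. \<Sum>k | degG deg k = n - degG deg h. f h * u k)"
    by (rule sum.Sigma[symmetric]) (auto simp: finite_degG_le finite_degG_eq)
  also have "\<dots> = (\<Sum>i\<le>n. \<Sum>h\<in>{h \<in> {h. degG deg h \<le> n}. degG deg h = i}. \<Sum>k | degG deg k = n - degG deg h. f h * u k)"
    by (rule sum.group[symmetric]) (auto simp: finite_degG_le)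
  also have "\<dots> = (\<Sum>i\<le>n. (\<Sum>h | degG deg h = i. f h) * (\<Sum>k | degG deg k = n - i. u k))"
  proof (rule sum.cong[OF refl])
    fix i assume "i \<in> {..n}"
    then have "{h \<in> {h. degG deg h \<le> n}. degG deg h = i} = {h. degG deg h = i}"
      by auto
    then show "(\<Sum>h\<in>{h \<in> {h. degG deg h \<le> n}. degG deg h = i}. \<Sum>k | degG deg k = n - degG deg h. f h * u k) =
          (\<Sum>h | degG deg h = i. f h) * (\<Sum>k | degG deg k = n - i. u k)"
      by (simp add: sum_product)
  qed
  finally show ?thesis .
qed

definition G :: "nat \<Rightarrow> real" where
  "G n = real (G_count deg n)"

definition M :: "nat \<Rightarrow> real" where
  "M n = (\<Sum>g | degG deg g = n. real_of_int (mobiusG g))"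

definition \<Lambda> :: "nat \<Rightarrow> real" where
  "\<Lambda> n = (\<Sum>g | degG deg g = n. mangoldtG deg g)"

definition smooth_count :: "'p set \<Rightarrow> nat \<Rightarrow> real" where
  "smooth_count S n = real (card {g. degG deg g = n \<and> set_mset g \<subseteq> S})"

lemma G_nonneg: "G n \<ge> 0"
  by (simp add: G_def)

lemma G_0: "G 0 = 1"
  by (simp add: G_def G_count_def degG_eq_0_set)

lemma abs_M_le_G: "\<bar>M n\<bar> \<le> G n"
proof -
  have "\<bar>M n\<bar> \<le> (\<Sum>g | degG deg g = n. \<bar>real_of_int (mobiusG g)\<bar>)"
    unfolding M_def by (rule sum_abs)
  also have "\<dots> \<le> (\<Sum>g | degG deg g = n. 1)"
    by (rule sum_mono) (simp add: mobiusG_def)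
  finally show ?thesis
    by (simp add: G_def G_count_def)
qed

lemma \<Lambda>_nonneg: "\<Lambda> n \<ge> 0"
  unfolding \<Lambda>_def by (intro sum_nonneg mangoldtG_nonneg)

lemma \<Lambda>_le: "\<Lambda> n \<le> real n * G n"
proof -
  have "\<Lambda> n \<le> (\<Sum>g | degG deg g = n. real n)"
    unfolding \<Lambda>_def by (rule sum_mono) (use mangoldtG_le_degG in auto)
  then show ?thesis
    by (simp add: G_def G_count_def mult.commute)
qed

lemma \<Lambda>_0: "\<Lambda> 0 = 0"
  using \<Lambda>_le[of 0] \<Lambda>_nonneg[of 0] by simp

lemma abs_\<Lambda>_div_le_G: "\<bar>\<Lambda> n / real n\<bar> \<le> G n"
  using \<Lambda>_le[of n] \<Lambda>_nonneg[of n] G_nonneg[of n] by (cases "n = 0") (simp_all add: field_simps)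

lemma M_convolution_G: "(\<Sum>i\<le>n. M i * G (n - i)) = (if n = 0 then 1 else 0)"
proof -
  have "(\<Sum>i\<le>n. M i * G (n - i)) =
        (\<Sum>g | degG deg g = n. \<Sum>h | h \<subseteq># g. real_of_int (mobiusG h) * 1)"
    using sum_degG_eq_convolution[of "\<lambda>h. real_of_int (mobiusG h)" "\<lambda>_. 1" n]
    by (simp add: M_def G_def G_count_def)
  also have "\<dots> = (\<Sum>g | degG deg g = n. if g = {#} then 1 else 0)"
  proof (rule sum.cong[OF refl])
    fix g :: "'p multiset"
    show "(\<Sum>h | h \<subseteq># g. real_of_int (mobiusG h) * 1) = (if g = {#} then 1 else 0)"
      using sum_mobiusG_smooth_cofactor[of g UNIV] by (cases "g = {#}") simp_all
  qed
  also have "\<dots> = (if n = 0 then 1 else 0)"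
    by (cases "n = 0") (auto simp: degG_eq_0_set intro!: sum.neutral)
  finally show ?thesis .
qed

lemma \<Lambda>_convolution_G: "(\<Sum>i\<le>n. \<Lambda> i * G (n - i)) = real n * G n"
proof -
  have "(\<Sum>i\<le>n. \<Lambda> i * G (n - i)) = (\<Sum>g | degG deg g = n. \<Sum>h | h \<subseteq># g. mangoldtG deg h * 1)"
    using sum_degG_eq_convolution[of "mangoldtG deg" "\<lambda>_. 1" n]
    by (simp add: \<Lambda>_def G_def G_count_def)
  also have "\<dots> = real n * G n"
    by (simp add: sum_mangoldtG_submultisets G_def G_count_def)
  finally show ?thesis .
qed

lemma sum_mobiusG_coprime_eq_convolution:
  "(\<Sum>g | degG deg g = n \<and> set_mset g \<inter> S = {}. real_of_int (mobiusG g)) =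
   (\<Sum>i\<le>n. M i * smooth_count S (n - i))"
proof -
  define u where "u k = (if set_mset k \<subseteq> S then 1 else 0 :: real)" for k :: "'p multiset"
  have "smooth_count S j = (\<Sum>k | degG deg k = j. u k)" for j
  proof -
    have "(\<Sum>k | degG deg k = j. u k) = (\<Sum>k \<in> {k \<in> {k. degG deg k = j}. set_mset k \<subseteq> S}. 1)"
      unfolding u_def by (rule sum.inter_filter[OF finite_degG_eq, symmetric])
    then show ?thesis
      by (simp add: smooth_count_def)
  qed
  then have "(\<Sum>i\<le>n. M i * smooth_count S (n - i)) =
      (\<Sum>g | degG deg g = n. \<Sum>h | h \<subseteq># g. real_of_int (mobiusG h) * u (g - h))"
    using sum_degG_eq_convolution[of "\<lambda>h. real_of_int (mobiusG h)" u n] by (simp add: M_def)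
  also have "\<dots> = (\<Sum>g | degG deg g = n. if set_mset g \<inter> S = {} then real_of_int (mobiusG g) else 0)"
  proof (rule sum.cong[OF refl])
    fix g :: "'p multiset"
    have "(\<Sum>h | h \<subseteq># g. real_of_int (mobiusG h) * u (g - h)) =
        (\<Sum>h | h \<subseteq># g. if set_mset (g - h) \<subseteq> S then real_of_int (mobiusG h) else 0)"
      by (intro sum.cong) (auto simp: u_def)
    also have "\<dots> = (\<Sum>h \<in> {h \<in> {h. h \<subseteq># g}. set_mset (g - h) \<subseteq> S}. real_of_int (mobiusG h))"
      by (rule sum.inter_filter[OF finite_submultisets, symmetric])
    finally show "(\<Sum>h | h \<subseteq># g. real_of_int (mobiusG h) * u (g - h)) =
        (if set_mset g \<inter> S = {} then real_of_int (mobiusG g) else 0)"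
      by (simp add: sum_mobiusG_smooth_cofactor)
  qed
  also have "\<dots> = (\<Sum>g \<in> {g \<in> {g. degG deg g = n}. set_mset g \<inter> S = {}}. real_of_int (mobiusG g))"
    by (rule sum.inter_filter[OF finite_degG_eq, symmetric])
  finally show ?thesis
    by simp
qed

lemma finite_primes_deg_le: "finite {P. deg P \<le> m}"
proof -
  have "(\<lambda>P. {#P#}) ` {P. deg P \<le> m} \<subseteq> {g. degG deg g \<le> m}"
    by auto
  then have "finite ((\<lambda>P. {#P#}) ` {P. deg P \<le> m})"
    by (rule finite_subset) (rule finite_degG_le)
  then show ?thesis
    by (rule finite_imageD) (simp add: inj_on_def)
qed

lemma card_primes_deg_le: "real (card {P. deg P \<le> m}) \<le> (\<Sum>d\<le>m. G d)"
proof -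
  have "card {P. deg P \<le> m} \<le> card {g. degG deg g \<le> m}"
    by (rule card_inj_on_le[where f = "\<lambda>P. {#P#}"]) (auto simp: inj_on_def finite_degG_le)
  also have "{g. degG deg g \<le> m} = (\<Union>d\<le>m. {g. degG deg g = d})"
    by auto
  also have "card \<dots> = (\<Sum>d\<le>m. G_count deg d)"
    unfolding G_count_def by (rule card_UN_disjoint) (auto simp: finite_degG_eq)
  finally show ?thesis
    by (simp add: G_def flip: of_nat_sum)
qed

lemma card_smooth_degG_le:
  assumes "finite S"
  shows "card {g. degG deg g \<le> n \<and> set_mset g \<subseteq> S} \<le> Suc n ^ card S"
proof -
  define X where "X = {g. degG deg g \<le> n \<and> set_mset g \<subseteq> S}"
  have "card X \<le> card (S \<rightarrow>\<^sub>E {..n})"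
  proof (rule card_inj_on_le)
    show "inj_on (\<lambda>g. restrict (count g) S) X"
    proof (rule inj_onI)
      fix g h assume "g \<in> X" "h \<in> X" and eq: "restrict (count g) S = restrict (count h) S"
      show "g = h"
      proof (rule multiset_eqI)
        fix p
        show "count g p = count h p"
        proof (cases "p \<in> S")
          case True
          then show ?thesis
            using fun_cong[OF eq, of p] by simp
        next
          case False
          then have "p \<notin># g" "p \<notin># h"
            using \<open>g \<in> X\<close> \<open>h \<in> X\<close> by (auto simp: X_def)
          then show ?thesis
            by (simp add: not_in_iff)
        qed
      qed
    qed
    have "count g p \<le> n" if "g \<in> X" for g p
      using that count_le_size[of g p] size_le_degG[of g] by (auto simp: X_def)
    then show "(\<lambda>g. restrict (count g) S) ` X \<subseteq> S \<rightarrow>\<^sub>E {..n}"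
      by auto
  qed (use assms in \<open>simp add: finite_PiE\<close>)
  with assms show ?thesis
    by (simp add: X_def card_PiE)
qed

lemma sum_smooth_count_le:
  assumes "finite S"
  shows "(\<Sum>j\<le>n. smooth_count S j) \<le> real (Suc n) ^ card S"
proof -
  have "{g. degG deg g \<le> n \<and> set_mset g \<subseteq> S} = (\<Union>j\<le>n. {g. degG deg g = j \<and> set_mset g \<subseteq> S})"
    by auto
  then have "(\<Sum>j\<le>n. card {g. degG deg g = j \<and> set_mset g \<subseteq> S}) = card {g. degG deg g \<le> n \<and> set_mset g \<subseteq> S}"
    by (simp only:) (rule card_UN_disjoint[symmetric]; auto intro: finite_subset[OF _ finite_degG_eq])
  also have "\<dots> \<le> Suc n ^ card S"
    by (rule card_smooth_degG_le[OF assms])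
  finally have "real (\<Sum>j\<le>n. card {g. degG deg g = j \<and> set_mset g \<subseteq> S}) \<le> real (Suc n ^ card S)"
    by (simp only: of_nat_le_iff)
  then show ?thesis
    by (simp add: smooth_count_def)
qed

lemma R_sum_eq_convolution:
  fixes q :: real and m :: nat
  defines "T \<equiv> {P. deg P \<le> m}"
  shows "R_sum deg q n m = (\<Sum>j\<le>n. smooth_count T j / q ^ j * (\<Sum>i\<le>n - j. M i / q ^ i))"
proof -
  define A where "A = {g. degG deg g \<le> n \<and> set_mset g \<inter> T = {}}"
  have "finite A"
    unfolding A_def by (rule finite_subset[OF _ finite_degG_le[of n]]) auto
  have "R_sum deg q n m = (\<Sum>g\<in>A. real_of_int (mobiusG g) / q ^ degG deg g)"
    unfolding R_sum_def A_def T_def normG_def by (simp add: d_minus_gt_iff)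
  also have "\<dots> = (\<Sum>k\<le>n. \<Sum>g\<in>{g \<in> A. degG deg g = k}. real_of_int (mobiusG g) / q ^ degG deg g)"
    by (rule sum.group[OF \<open>finite A\<close>, symmetric]) (auto simp: A_def)
  also have "\<dots> = (\<Sum>k\<le>n. (\<Sum>g | degG deg g = k \<and> set_mset g \<inter> T = {}. real_of_int (mobiusG g)) / q ^ k)"
    by (intro sum.cong refl) (auto simp: A_def sum_divide_distrib intro!: sum.cong)
  also have "\<dots> = (\<Sum>k\<le>n. \<Sum>i\<le>k. M i / q ^ i * (smooth_count T (k - i) / q ^ (k - i)))"
    by (intro sum.cong refl)
      (simp add: sum_mobiusG_coprime_eq_convolution sum_divide_distrib flip: power_add)
  also have "\<dots> = (\<Sum>j\<le>n. \<Sum>i\<le>n - j. M i / q ^ i * (smooth_count T j / q ^ j))"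
    by (rule sum_triangle_swap)
  finally show ?thesis
    by (simp add: sum_distrib_left mult.commute)
qed

definition Z_fps :: "complex fps" where
  "Z_fps = Abs_fps (\<lambda>n. of_real (G n))"

definition M_fps :: "complex fps" where
  "M_fps = Abs_fps (\<lambda>n. of_real (M n))"

definition logZ_fps :: "complex fps" where
  "logZ_fps = Abs_fps (\<lambda>n. of_real (\<Lambda> n / real n))"

lemma Z_fps_times_M_fps: "Z_fps * M_fps = 1"
proof (rule fps_ext)
  fix n
  have "fps_nth (M_fps * Z_fps) n = of_real (\<Sum>i\<le>n. M i * G (n - i))"
    by (simp add: fps_mult_nth M_fps_def Z_fps_def atLeast0AtMost)
  then show "fps_nth (Z_fps * M_fps) n = fps_nth 1 n"
    by (simp add: M_convolution_G mult.commute)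
qed

lemma fps_deriv_Z_fps: "fps_deriv Z_fps = fps_deriv logZ_fps * Z_fps"
proof (rule fps_ext)
  fix n
  have "fps_nth (fps_deriv logZ_fps * Z_fps) n = of_real (\<Sum>i\<le>n. \<Lambda> (Suc i) * G (n - i))"
    by (simp add: fps_mult_nth logZ_fps_def Z_fps_def fps_deriv_def atLeast0AtMost del: of_nat_Suc)
  also have "(\<Sum>i\<le>n. \<Lambda> (Suc i) * G (n - i)) = (\<Sum>i\<le>Suc n. \<Lambda> i * G (Suc n - i))"
    by (subst sum.atMost_Suc_shift) (simp add: \<Lambda>_0)
  finally show "fps_nth (fps_deriv Z_fps) n = fps_nth (fps_deriv logZ_fps * Z_fps) n"
    by (simp add: \<Lambda>_convolution_G fps_deriv_def Z_fps_def)
qed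

end

section \<open>Generating functions under Axiom A-sharp\<close>

locale A_sharp_semigroup = additive_arith_semigroup deg for deg :: "'p \<Rightarrow> nat" +
  fixes c q \<eta>0 C0 :: real
  assumes c_pos: "c > 0" and q_gt_1: "q > 1" and \<eta>0_nonneg: "0 \<le> \<eta>0" and \<eta>0_less_1: "\<eta>0 < 1"
    and A_sharp: "\<And>n. \<bar>real (G_count deg n) - c * q ^ n\<bar> \<le> C0 * q powr (\<eta>0 * real n)"
begin

lemma q_pos: "q > 0"
  using q_gt_1 by simp

definition K :: real where
  "K = c + \<bar>C0\<bar>"

lemma K_pos: "K > 0"
  using c_pos by (simp add: K_def add_pos_nonneg)

lemma G_le: "G n \<le> K * q ^ n"
proof -
  have "q powr (\<eta>0 * real n) \<le> q powr (real n)"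
    using q_gt_1 \<eta>0_nonneg \<eta>0_less_1 by (intro powr_mono) (auto intro: mult_left_le_one_le)
  also have "\<dots> = q ^ n"
    using q_pos by (simp add: powr_realpow)
  finally have "C0 * q powr (\<eta>0 * real n) \<le> \<bar>C0\<bar> * q ^ n"
    by (intro mult_mono) auto
  moreover have "G n - c * q ^ n \<le> C0 * q powr (\<eta>0 * real n)"
    using abs_le_D1[OF A_sharp[of n]] by (simp add: G_def)
  ultimately show ?thesis
    by (simp add: K_def algebra_simps)
qed

lemma abs_G_minus_main_term_le: "\<bar>G n - c * q ^ n\<bar> \<le> C0 * (q powr \<eta>0) ^ n"
  using A_sharp[of n] q_pos by (simp add: G_def powr_powr[symmetric] powr_realpow[symmetric] mult.commute)

definition E_fps :: "complex fps" where
  "E_fps = Abs_fps (\<lambda>n. of_real (G n - c * q ^ n))"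

definition E_radius :: real where
  "E_radius = 1 / q powr \<eta>0"

lemma E_radius_gt: "1 / q < E_radius"
proof -
  have "q powr \<eta>0 < q powr 1"
    using q_gt_1 \<eta>0_less_1 by (intro powr_less_mono) auto
  then show ?thesis
    using q_pos by (simp add: E_radius_def field_simps)
qed

lemma E_radius_le_1: "E_radius \<le> 1"
  using q_gt_1 \<eta>0_nonneg by (simp add: E_radius_def ge_one_powr_ge_zero)

lemma conv_radius_Z_fps: "fps_conv_radius Z_fps \<ge> ereal (1 / q)"
  unfolding Z_fps_def using G_le G_nonneg q_pos
  by (intro fps_conv_radius_ge_if_geometric_bound[where K = K]) auto

lemma conv_radius_M_fps: "fps_conv_radius M_fps \<ge> ereal (1 / q)"
  unfolding M_fps_def using G_le abs_M_le_G q_pos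
  by (intro fps_conv_radius_ge_if_geometric_bound[where K = K]) (auto intro: order_trans)

lemma conv_radius_logZ_fps: "fps_conv_radius logZ_fps \<ge> ereal (1 / q)"
  unfolding logZ_fps_def using G_le abs_\<Lambda>_div_le_G q_pos
  by (intro fps_conv_radius_ge_if_geometric_bound[where K = K])
    (auto intro: order_trans simp del: of_real_divide)

lemma conv_radius_E_fps: "fps_conv_radius E_fps \<ge> ereal E_radius"
  unfolding E_fps_def E_radius_def
proof (rule fps_conv_radius_ge_if_geometric_bound[where K = C0])
  show "norm (complex_of_real (G n - c * q ^ n)) \<le> C0 * (q powr \<eta>0) ^ n" for n
    by (simp only: norm_of_real abs_G_minus_main_term_le)
  show "0 < q powr \<eta>0"
    using q_pos by simp
qed

lemma eval_Z_times_eval_M: "norm z < 1 / q \<Longrightarrow> eval_fps Z_fps z * eval_fps M_fps z = 1"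
  using eval_fps_mult[OF norm_less_fps_conv_radius[OF _ conv_radius_Z_fps]
      norm_less_fps_conv_radius[OF _ conv_radius_M_fps]]
  by (simp add: Z_fps_times_M_fps)

lemma eval_Z_eq_exp:
  assumes "norm z < 1 / q"
  shows "eval_fps Z_fps z = exp (eval_fps logZ_fps z)"
proof -
  define B where "B = ball (0::complex) (1 / q)"
  define h where "h x = eval_fps Z_fps x * exp (- eval_fps logZ_fps x)" for x
  have "(h has_field_derivative 0) (at x within B)" if "x \<in> B" for x
  proof -
    have x: "norm x < 1 / q"
      using that by (simp add: B_def)
    note Z_in = norm_less_fps_conv_radius[OF x conv_radius_Z_fps]
    note L_in = norm_less_fps_conv_radius[OF x conv_radius_logZ_fps]
    have "eval_fps (fps_deriv Z_fps) x = eval_fps (fps_deriv logZ_fps) x * eval_fps Z_fps x"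
      unfolding fps_deriv_Z_fps
      by (rule eval_fps_mult[OF less_le_trans[OF L_in fps_conv_radius_deriv] Z_in])
    moreover have "(h has_field_derivative eval_fps (fps_deriv Z_fps) x * exp (- eval_fps logZ_fps x) +
        exp (- eval_fps logZ_fps x) * (- eval_fps (fps_deriv logZ_fps) x) * eval_fps Z_fps x) (at x within B)"
      unfolding h_def
      by (intro DERIV_mult DERIV_chain2[OF DERIV_exp] DERIV_minus has_field_derivative_eval_fps Z_in L_in)
    ultimately show ?thesis
      by (simp add: algebra_simps)
  qed
  then obtain k where k: "\<And>x. x \<in> B \<Longrightarrow> h x = k"
    using has_field_derivative_zero_constant[of B h] by (auto simp: B_def)
  have "h 0 = 1"
    by (simp add: h_def eval_fps_at_0 Z_fps_def logZ_fps_def G_0 \<Lambda>_0)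
  then have "h z = 1"
    using k[of 0] k[of z] assms q_pos by (simp add: B_def)
  then show ?thesis
    by (simp add: h_def exp_minus field_simps)
qed

lemma eval_Z_eq_pole_plus_E:
  assumes "norm z < 1 / q"
  shows "eval_fps Z_fps z = of_real c / (1 - of_real q * z) + eval_fps E_fps z"
proof -
  have "norm (of_real q * z) < 1"
    using assms q_pos by (simp add: norm_mult field_simps)
  then have "(\<lambda>n. of_real c * (of_real q * z) ^ n) sums (of_real c / (1 - of_real q * z))"
    using sums_mult[OF geometric_sums, of "of_real q * z" "of_real c"] by simp
  moreover have "(\<lambda>n. of_real (G n - c * q ^ n) * z ^ n) sums eval_fps E_fps z"
    using sums_eval_fps[OF norm_less_fps_conv_radius[OF _ conv_radius_E_fps]] assms E_radius_gt
    by (simp add: E_fps_def)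
  ultimately have "(\<lambda>n. of_real c * (of_real q * z) ^ n + of_real (G n - c * q ^ n) * z ^ n) sums
      (of_real c / (1 - of_real q * z) + eval_fps E_fps z)"
    by (rule sums_add)
  moreover have "of_real c * (of_real q * z) ^ n + of_real (G n - c * q ^ n) * z ^ n = fps_nth Z_fps n * z ^ n" for n
    by (simp add: Z_fps_def algebra_simps power_mult_distrib)
  ultimately have "(\<lambda>n. fps_nth Z_fps n * z ^ n) sums (of_real c / (1 - of_real q * z) + eval_fps E_fps z)"
    by simp
  then show ?thesis
    using sums_unique2[OF sums_eval_fps[OF norm_less_fps_conv_radius[OF assms conv_radius_Z_fps]]] by blast
qed

text \<open>On the disc \<open>|z| < 1/q\<close> we have \<open>W z = (1 - q z) Z(z)\<close>, but \<open>W\<close> is holomorphic on the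
  larger disc of radius \<open>E_radius\<close> on which the error series \<open>E_fps\<close> converges.\<close>
definition W :: "complex \<Rightarrow> complex" where
  "W z = of_real c + (1 - of_real q * z) * eval_fps E_fps z"

lemma W_holomorphic: "W holomorphic_on ball 0 E_radius"
proof -
  have "eval_fps E_fps holomorphic_on ball 0 E_radius"
    by (rule holomorphic_on_eval_fps[OF ball_eball_mono[OF conv_radius_E_fps]])
  then show ?thesis
    unfolding W_def by (intro holomorphic_intros ball_eball_mono[OF conv_radius_E_fps])
qed

lemma isCont_W:
  assumes "norm z < E_radius"
  shows "isCont W z"
  using holomorphic_on_imp_continuous_on[OF W_holomorphic] assms
  by (simp add: continuous_on_eq_continuous_at)

lemma one_minus_q_times_nonzero:
  fixes z :: complex
  assumes "norm z < 1 / q"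
  shows "1 - of_real q * z \<noteq> 0"
proof
  assume "1 - of_real q * z = 0"
  then have "of_real q * z = 1"
    by simp
  then have "norm (of_real q * z) = 1"
    by simp
  with assms q_pos show False
    by (simp add: norm_mult field_simps)
qed

lemma eval_Z_eq_W_div:
  assumes "norm z < 1 / q"
  shows "eval_fps Z_fps z = W z / (1 - of_real q * z)"
  using one_minus_q_times_nonzero[OF assms]
  by (simp add: W_def add_divide_distrib eval_Z_eq_pole_plus_E[OF assms])

lemma W_nonzero_inside:
  assumes "norm z < 1 / q"
  shows "W z \<noteq> 0"
proof
  assume "W z = 0"
  then have "eval_fps Z_fps z = 0"
    by (simp add: eval_Z_eq_W_div[OF assms])
  then show False
    using eval_Z_times_eval_M[OF assms] by simp
qed

lemma W_inverse_q: "W (of_real (1 / q)) = of_real c"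
  using q_pos by (simp add: W_def)

lemma Z_series_eq_eval_Z: "Z_series deg z = eval_fps Z_fps z"
  by (simp add: Z_series_def eval_fps_def Z_fps_def G_def)

section \<open>Zeros of W on the closed disc of radius 1/q\<close>

lemma re_logZ_sums:
  assumes "norm x < 1 / q"
  shows "(\<lambda>n. \<Lambda> n / real n * Re (x ^ n)) sums Re (eval_fps logZ_fps x)"
proof -
  have "(\<lambda>n. fps_nth logZ_fps n * x ^ n) sums eval_fps logZ_fps x"
    by (rule sums_eval_fps[OF norm_less_fps_conv_radius[OF assms conv_radius_logZ_fps]])
  then have "(\<lambda>n. Re (fps_nth logZ_fps n * x ^ n)) sums Re (eval_fps logZ_fps x)"
    by (simp add: sums_complex_iff)
  then show ?thesis
    by (simp add: logZ_fps_def del: of_real_divide)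
qed

lemma mertens_inequality:
  fixes \<omega> :: complex
  assumes "norm \<omega> = 1" and "0 < r" and "r < 1 / q"
  shows "1 \<le> norm (eval_fps Z_fps (of_real r)) ^ 3 * norm (eval_fps Z_fps (of_real r * \<omega>)) ^ 4 *
              norm (eval_fps Z_fps (of_real r * \<omega> ^ 2))"
proof -
  have in_disc: "norm (complex_of_real r) < 1 / q" "norm (complex_of_real r * \<omega>) < 1 / q"
    "norm (complex_of_real r * \<omega> ^ 2) < 1 / q"
    using assms by (simp_all add: norm_mult norm_power)
  define L where "L x = Re (eval_fps logZ_fps x)" for x
  have "(\<lambda>n. 3 * (\<Lambda> n / real n * Re (complex_of_real r ^ n)) +
      4 * (\<Lambda> n / real n * Re ((of_real r * \<omega>) ^ n)) + \<Lambda> n / real n * Re ((of_real r * \<omega> ^ 2) ^ n))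
      sums (3 * L (of_real r) + 4 * L (of_real r * \<omega>) + L (of_real r * \<omega> ^ 2))"
    unfolding L_def by (intro sums_add sums_mult re_logZ_sums in_disc)
  also have "(\<lambda>n. 3 * (\<Lambda> n / real n * Re (complex_of_real r ^ n)) +
      4 * (\<Lambda> n / real n * Re ((of_real r * \<omega>) ^ n)) + \<Lambda> n / real n * Re ((of_real r * \<omega> ^ 2) ^ n)) =
      (\<lambda>n. \<Lambda> n / real n * r ^ n * (3 + 4 * Re (\<omega> ^ n) + Re ((\<omega> ^ n) ^ 2)))"
    by (simp add: power_mult_distrib algebra_simps flip: power_mult of_real_power)
  finally have series: "(\<lambda>n. \<Lambda> n / real n * r ^ n * (3 + 4 * Re (\<omega> ^ n) + Re ((\<omega> ^ n) ^ 2))) sums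
      (3 * L (of_real r) + 4 * L (of_real r * \<omega>) + L (of_real r * \<omega> ^ 2))" .
  have "0 \<le> 3 * L (of_real r) + 4 * L (of_real r * \<omega>) + L (of_real r * \<omega> ^ 2)"
  proof (rule sums_le[OF _ sums_zero series])
    show "0 \<le> \<Lambda> n / real n * r ^ n * (3 + 4 * Re (\<omega> ^ n) + Re ((\<omega> ^ n) ^ 2))" for n
      using \<Lambda>_nonneg[of n] assms three_four_one_nonneg[of "\<omega> ^ n"] by (simp add: norm_power)
  qed
  then have "1 \<le> exp (3 * L (of_real r) + 4 * L (of_real r * \<omega>) + L (of_real r * \<omega> ^ 2))"
    by simp
  also have "\<dots> = exp (L (of_real r)) ^ 3 * exp (L (of_real r * \<omega>)) ^ 4 * exp (L (of_real r * \<omega> ^ 2))"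
    by (simp add: exp_add exp_of_nat_mult[symmetric])
  also have "\<dots> = norm (eval_fps Z_fps (of_real r)) ^ 3 * norm (eval_fps Z_fps (of_real r * \<omega>)) ^ 4 *
      norm (eval_fps Z_fps (of_real r * \<omega> ^ 2))"
    using in_disc by (simp add: L_def eval_Z_eq_exp)
  finally show ?thesis .
qed

lemma mertens_inequality_W:
  fixes \<omega> :: complex
  assumes "norm \<omega> = 1" and "0 < r" and "r < 1 / q"
  shows "(1 - q * r) ^ 3 * norm (1 - of_real q * (of_real r * \<omega>)) ^ 4 * norm (1 - of_real q * (of_real r * \<omega> ^ 2))
      \<le> norm (W (of_real r)) ^ 3 * norm (W (of_real r * \<omega>)) ^ 4 * norm (W (of_real r * \<omega> ^ 2))"
proof -
  have in_disc: "norm (complex_of_real r) < 1 / q" "norm (complex_of_real r * \<omega>) < 1 / q"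
    "norm (complex_of_real r * \<omega> ^ 2) < 1 / q"
    using assms by (simp_all add: norm_mult norm_power)
  define d1 where "d1 = norm (1 - of_real q * (of_real r * \<omega>))"
  define d2 where "d2 = norm (1 - of_real q * (of_real r * \<omega> ^ 2))"
  have pos: "0 < 1 - q * r" "0 < d1" "0 < d2"
    using assms q_pos one_minus_q_times_nonzero[OF in_disc(2)] one_minus_q_times_nonzero[OF in_disc(3)]
    by (simp_all add: d1_def d2_def field_simps)
  have "1 - complex_of_real q * complex_of_real r = complex_of_real (1 - q * r)"
    by simp
  then have "norm (1 - complex_of_real q * complex_of_real r) = 1 - q * r"
    using \<open>0 < 1 - q * r\<close> by (simp only: norm_of_real)
  then have ineq: "1 \<le> (norm (W (of_real r)) / (1 - q * r)) ^ 3 * (norm (W (of_real r * \<omega>)) / d1) ^ 4 *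
      (norm (W (of_real r * \<omega> ^ 2)) / d2)"
    using mertens_inequality[OF assms] in_disc
    by (simp add: eval_Z_eq_W_div norm_divide d1_def d2_def)
  have clear_denominators: "x ^ 3 * y ^ 4 * w \<le> a ^ 3 * b ^ 4 * e"
    if "1 \<le> (a / x) ^ 3 * (b / y) ^ 4 * (e / w)" "0 < x" "0 < y" "0 < w" for a b e x y w :: real
  proof -
    have "(a / x) ^ 3 * (b / y) ^ 4 * (e / w) = (a ^ 3 * b ^ 4 * e) / (x ^ 3 * y ^ 4 * w)"
      by (simp add: power_divide)
    with that(1) have "1 \<le> (a ^ 3 * b ^ 4 * e) / (x ^ 3 * y ^ 4 * w)"
      by (simp only:)
    with that(2-4) show ?thesis
      by (simp add: le_divide_eq)
  qed
  show ?thesis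
    using clear_denominators[OF ineq pos] unfolding d1_def d2_def .
qed

lemma mertens_inequality_W_ray:
  fixes \<omega> :: complex
  assumes "norm \<omega> = 1" and "0 < r" and "r < 1 / q"
  shows "norm (1 - of_real q * (of_real r * \<omega>)) ^ 4 * norm (1 - of_real q * (of_real r * \<omega> ^ 2)) \<le>
    norm (W (of_real r)) ^ 3 * norm (W (of_real r * \<omega>) / of_real (r - 1 / q)) ^ 4 *
    norm (W (of_real r * \<omega> ^ 2)) * (1 - q * r) / q ^ 4"
proof -
  define u where "u = 1 - q * r"
  have "0 < u"
    using assms q_pos by (simp add: u_def field_simps)
  have "norm (complex_of_real (r - 1 / q)) = u / q"
    using assms q_pos by (simp only: norm_of_real) (simp add: u_def abs_if diff_divide_distrib)
  then have W_ray: "norm (W (of_real r * \<omega>)) = norm (W (of_real r * \<omega>) / of_real (r - 1 / q)) * (u / q)"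
    using \<open>0 < u\<close> q_pos by (simp add: norm_divide del: of_real_diff)
  have "u ^ 3 * (norm (1 - of_real q * (of_real r * \<omega>)) ^ 4 * norm (1 - of_real q * (of_real r * \<omega> ^ 2)))
      \<le> norm (W (of_real r)) ^ 3 * norm (W (of_real r * \<omega>)) ^ 4 * norm (W (of_real r * \<omega> ^ 2))"
    using mertens_inequality_W[OF assms] by (simp add: u_def mult.assoc)
  also have "\<dots> = u ^ 3 * (norm (W (of_real r)) ^ 3 * norm (W (of_real r * \<omega>) / of_real (r - 1 / q)) ^ 4 *
      norm (W (of_real r * \<omega> ^ 2)) * u / q ^ 4)"
    by (simp only: W_ray) (simp add: power_mult_distrib power_divide eval_nat_numeral mult_ac)
  finally have "norm (1 - of_real q * (of_real r * \<omega>)) ^ 4 * norm (1 - of_real q * (of_real r * \<omega> ^ 2)) \<le>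
      norm (W (of_real r)) ^ 3 * norm (W (of_real r * \<omega>) / of_real (r - 1 / q)) ^ 4 *
      norm (W (of_real r * \<omega> ^ 2)) * u / q ^ 4"
    by (rule mult_left_le_imp_le) (simp add: \<open>0 < u\<close>)
  then show ?thesis
    by (simp only: u_def)
qed

lemma tendsto_W_ray_quotient:
  assumes "norm \<omega> = 1" and "W (of_real (1 / q) * \<omega>) = 0"
  obtains L where "((\<lambda>r. W (of_real r * \<omega>) / of_real (r - 1 / q)) \<longlongrightarrow> L) (at_left (1 / q))"
proof -
  have "W field_differentiable at (of_real (1 / q) * \<omega>)"
    using assms(1) E_radius_gt q_pos
    by (intro holomorphic_on_imp_differentiable_at[OF W_holomorphic]) (auto simp: norm_divide)
  then obtain D where "(W has_field_derivative D) (at (of_real (1 / q) * \<omega>))"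
    unfolding field_differentiable_def by blast
  moreover have "\<omega> \<noteq> 0"
    using assms(1) by auto
  ultimately have "((\<lambda>r. W (of_real r * \<omega>) / of_real (r - 1 / q)) \<longlongrightarrow> \<omega> * D) (at (1 / q))"
    using tendsto_ray_difference_quotient[of W D "1 / q" \<omega>] assms(2) by simp
  then have "((\<lambda>r. W (of_real r * \<omega>) / of_real (r - 1 / q)) \<longlongrightarrow> \<omega> * D) (at_left (1 / q))"
    by (rule tendsto_mono[OF at_le, rotated]) simp
  then show ?thesis
    by (rule that)
qed

text \<open>If \<open>W (\<omega> / q) = 0\<close> then \<open>W (r \<omega>) = O(1/q - r)\<close>, which forces
  \<open>|Z r|\<^sup>3 |Z (r \<omega>)|\<^sup>4 |Z (r \<omega>\<^sup>2)| \<rightarrow> 0\<close> as \<open>r \<rightarrow> 1/q\<close>, contradicting Mertens' inequality.\<close>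
lemma W_nonzero_on_circle:
  assumes "norm z = 1 / q" and "z \<noteq> of_real (1 / q)" and "z \<noteq> - of_real (1 / q)"
  shows "W z \<noteq> 0"
proof
  assume "W z = 0"
  define \<omega> where "\<omega> = of_real q * z"
  have "norm \<omega> = 1"
    using assms(1) q_pos by (simp add: \<omega>_def norm_mult)
  have z_eq: "z = of_real (1 / q) * \<omega>"
    using q_pos by (simp add: \<omega>_def)
  have "\<omega> \<noteq> 1" "\<omega> ^ 2 \<noteq> 1"
    using assms(2,3) z_eq by (auto simp: power2_eq_1_iff)
  obtain L where L: "((\<lambda>r. W (of_real r * \<omega>) / of_real (r - 1 / q)) \<longlongrightarrow> L) (at_left (1 / q))"
    using tendsto_W_ray_quotient \<open>norm \<omega> = 1\<close> \<open>W z = 0\<close> z_eq by blast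
  have W_lim: "((\<lambda>r. W (of_real r * u)) \<longlongrightarrow> W (of_real (1 / q) * u)) (at_left (1 / q))" if "norm u = 1" for u
    using that E_radius_gt q_pos
    by (intro isCont_tendsto_compose[OF isCont_W] tendsto_intros) (simp add: norm_divide)
  have W_lim_real: "((\<lambda>r. W (of_real r)) \<longlongrightarrow> W (of_real (1 / q))) (at_left (1 / q))"
    using W_lim[of 1] by simp
  define lower where "lower r = norm (1 - of_real q * (of_real r * \<omega>)) ^ 4 * norm (1 - of_real q * (of_real r * \<omega> ^ 2))"
    for r :: real
  define upper where "upper r = norm (W (of_real r)) ^ 3 * norm (W (of_real r * \<omega>) / of_real (r - 1 / q)) ^ 4 *
    norm (W (of_real r * \<omega> ^ 2)) * (1 - q * r) / q ^ 4" for r :: real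
  have "0 < 1 / q"
    using q_pos by simp
  then have "\<forall>\<^sub>F r in at_left (1 / q). r \<in> {0<..<1 / q}"
    by (rule eventually_at_left_real)
  then have lower_le_upper: "\<forall>\<^sub>F r in at_left (1 / q). lower r \<le> upper r"
    by eventually_elim
      (auto simp only: lower_def upper_def greaterThanLessThan_iff
        intro!: mertens_inequality_W_ray[OF \<open>norm \<omega> = 1\<close>])
  have "(lower \<longlongrightarrow> lower (1 / q)) (at_left (1 / q))"
    unfolding lower_def[abs_def] by (intro tendsto_intros)
  moreover have "(upper \<longlongrightarrow> norm (W (of_real (1 / q))) ^ 3 * norm L ^ 4 *
      norm (W (of_real (1 / q) * \<omega> ^ 2)) * (1 - q * (1 / q)) / q ^ 4) (at_left (1 / q))"
    unfolding upper_def[abs_def] using \<open>norm \<omega> = 1\<close> q_pos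
    by (intro tendsto_intros W_lim W_lim_real L) (simp_all add: norm_power)
  ultimately have "lower (1 / q) \<le> 0"
    using lower_le_upper q_pos by (intro tendsto_le[OF trivial_limit_at_left_real]) simp_all
  moreover have "lower (1 / q) = norm (1 - \<omega>) ^ 4 * norm (1 - \<omega> ^ 2)"
    using q_pos by (simp add: lower_def)
  moreover have "0 < norm (1 - \<omega>) ^ 4 * norm (1 - \<omega> ^ 2)"
    using \<open>\<omega> \<noteq> 1\<close> \<open>\<omega> ^ 2 \<noteq> 1\<close> by simp
  ultimately show False
    by linarith
qed

lemma W_nonzero_if_continuation_nonzero:
  assumes "Z_cont_nonzero_at deg q w" and "norm w \<le> 1 / q" and "1 - of_real q * w \<noteq> 0"
  shows "W w \<noteq> 0"
proof -
  obtain S F where "open S" "ball 0 (1 / q) \<subseteq> S" "w \<in> S" "F holomorphic_on S"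
    and F_eq: "\<forall>z\<in>ball 0 (1 / q). F z = Z_series deg z" and "F w \<noteq> 0"
    using assms(1) unfolding Z_cont_nonzero_at_def by blast
  have "w islimpt ball 0 (1 / q)"
    using assms(2) q_pos by (simp add: islimpt_ball)
  then have nontrivial: "at w within ball 0 (1 / q) \<noteq> bot"
    by (simp add: trivial_limit_within)
  have "isCont F w"
    using \<open>open S\<close> \<open>w \<in> S\<close> holomorphic_on_imp_continuous_on[OF \<open>F holomorphic_on S\<close>]
    by (simp add: continuous_on_eq_continuous_at)
  then have "(F \<longlongrightarrow> F w) (at w within ball 0 (1 / q))"
    using continuous_at_imp_continuous_at_within by (auto simp: continuous_within)
  moreover have "isCont (\<lambda>z. W z / (1 - of_real q * z)) w"
    using assms(2,3) E_radius_gt by (intro continuous_intros isCont_W) simp_all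
  then have "((\<lambda>z. W z / (1 - of_real q * z)) \<longlongrightarrow> W w / (1 - of_real q * w)) (at w within ball 0 (1 / q))"
    using continuous_at_imp_continuous_at_within by (auto simp: continuous_within)
  moreover have "\<forall>\<^sub>F z in at w within ball 0 (1 / q). W z / (1 - of_real q * z) = F z"
    using F_eq by (auto simp: eventually_at_filter Z_series_eq_eval_Z eval_Z_eq_W_div)
  ultimately have "F w = W w / (1 - of_real q * w)"
    using nontrivial by (metis Lim_transform_eventually tendsto_unique)
  with \<open>F w \<noteq> 0\<close> show ?thesis
    by auto
qed

lemma W_nonzero_closed_disc:
  assumes "Z_cont_nonzero_at deg q (- 1 / complex_of_real q)" and "norm z \<le> 1 / q"
  shows "W z \<noteq> 0"
proof -
  consider "norm z < 1 / q" | "z = of_real (1 / q)" | "z = - of_real (1 / q)"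
    | "norm z = 1 / q" "z \<noteq> of_real (1 / q)" "z \<noteq> - of_real (1 / q)"
    using assms(2) by fastforce
  then show ?thesis
  proof cases
    case 1
    then show ?thesis
      by (rule W_nonzero_inside)
  next
    case 2
    then show ?thesis
      using W_inverse_q c_pos by simp
  next
    case 3
    have "1 - of_real q * z = 2"
      using 3 q_pos by simp
    with assms 3 show ?thesis
      by (intro W_nonzero_if_continuation_nonzero) simp_all
  next
    case 4
    then show ?thesis
      by (rule W_nonzero_on_circle)
  qed
qed

lemma W_nonzero_larger_disc:
  assumes "Z_cont_nonzero_at deg q (- 1 / complex_of_real q)"
  obtains \<rho> where "1 / q < \<rho>" and "\<rho> \<le> E_radius" and "\<And>z. norm z < \<rho> \<Longrightarrow> W z \<noteq> 0"
proof -
  define R where "R = (1 / q + E_radius) / 2"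
  have R: "1 / q < R" "R < E_radius"
    using E_radius_gt by (simp_all add: R_def)
  define zeros where "zeros = {z \<in> cball 0 R. W z = 0}"
  have "continuous_on (cball 0 R) W"
    using R by (intro continuous_at_imp_continuous_on ballI isCont_W) simp
  then have "closed zeros"
    unfolding zeros_def by (rule continuous_closed_preimage_constant) simp
  moreover have "bounded zeros"
    by (rule bounded_subset[OF bounded_cball[of 0 R]]) (auto simp: zeros_def)
  ultimately have "compact zeros"
    by (simp add: compact_eq_bounded_closed)
  show ?thesis
  proof (cases "zeros = {}")
    case True
    show ?thesis
      by (rule that[of R]) (use R True in \<open>auto simp: zeros_def\<close>)
  next
    case False
    obtain z0 where "z0 \<in> zeros" and nearest: "\<And>z. z \<in> zeros \<Longrightarrow> norm z0 \<le> norm z"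
      using continuous_attains_inf[OF \<open>compact zeros\<close> False continuous_on_norm_id] by blast
    then have "norm z0 \<le> R" "W z0 = 0"
      by (auto simp: zeros_def)
    show ?thesis
    proof (rule that[of "norm z0"])
      show "1 / q < norm z0"
        using W_nonzero_closed_disc[OF assms] \<open>W z0 = 0\<close> by force
      show "norm z0 \<le> E_radius"
        using \<open>norm z0 \<le> R\<close> R by simp
      show "W z \<noteq> 0" if "norm z < norm z0" for z
        using that nearest[of z] \<open>norm z0 \<le> R\<close> by (force simp: zeros_def)
    qed
  qed
qed

section \<open>Decay of the Moebius sums and the estimate of R(n, m)\<close>

lemma M_series_sums:
  assumes "0 < \<rho>" and "\<rho> \<le> E_radius" and nonzero: "\<And>z. norm z < \<rho> \<Longrightarrow> W z \<noteq> 0"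
    and "norm z < \<rho>"
  shows "(\<lambda>n. of_real (M n) * z ^ n) sums ((1 - of_real q * z) / W z)"
proof -
  define A where "A z = (1 - of_real q * z) / W z" for z
  have "W holomorphic_on eball 0 (ereal \<rho>)"
    by (rule holomorphic_on_subset[OF W_holomorphic]) (use assms(2) in auto)
  then have "A holomorphic_on eball 0 (ereal \<rho>)"
    unfolding A_def using nonzero by (intro holomorphic_intros) auto
  moreover have "A has_fps_expansion M_fps"
    unfolding has_fps_expansion_def
  proof
    show "0 < fps_conv_radius M_fps"
      using conv_radius_M_fps q_pos by (metis ereal_less(2) order_less_le_trans zero_less_divide_1_iff)
    have "\<forall>\<^sub>F z in nhds 0. z \<in> ball (0::complex) (1 / q)"
      using q_pos by (intro eventually_nhds_in_open) auto
    then show "\<forall>\<^sub>F z in nhds 0. eval_fps M_fps z = A z"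
    proof eventually_elim
      case (elim z)
      then have "norm z < 1 / q"
        by simp
      then have "W z / (1 - of_real q * z) * eval_fps M_fps z = 1"
        using eval_Z_times_eval_M eval_Z_eq_W_div by simp
      then show ?case
        using W_nonzero_inside[OF \<open>norm z < 1 / q\<close>] one_minus_q_times_nonzero[OF \<open>norm z < 1 / q\<close>]
        by (simp add: A_def field_simps)
    qed
  qed
  ultimately show ?thesis
    using has_fps_expansion_imp_sums_complex[of A M_fps "ereal \<rho>" z] assms(4)
    by (simp add: A_def M_fps_def)
qed

lemma M_exponential_decay:
  assumes "Z_cont_nonzero_at deg q (- 1 / complex_of_real q)"
  obtains t B where "1 / q \<le> t" and "t < 1" and "\<And>n. \<bar>M n\<bar> \<le> B * (q * t) ^ n"
    and "(\<lambda>n. M n / q ^ n) sums 0"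
proof -
  obtain \<rho> where \<rho>: "1 / q < \<rho>" "\<rho> \<le> E_radius" and nonzero: "\<And>z. norm z < \<rho> \<Longrightarrow> W z \<noteq> 0"
    using W_nonzero_larger_disc[OF assms] by blast
  have "0 < 1 / q"
    using q_pos by simp
  define r where "r = (1 / q + \<rho>) / 2"
  have r: "1 / q < r" "r < \<rho>"
    using \<rho> by (simp_all add: r_def)
  have "0 < r"
    using r \<open>0 < 1 / q\<close> by linarith
  have "(\<lambda>n. of_real (M n) * of_real r ^ n) sums ((1 - of_real q * of_real r) / W (of_real r))"
    using r \<rho> \<open>0 < r\<close> by (intro M_series_sums nonzero) simp_all
  then have "summable (\<lambda>n. complex_of_real (M n * r ^ n))"
    by (simp add: sums_iff)
  then have "(\<lambda>n. M n * r ^ n) \<longlonglongrightarrow> 0"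
    by (simp only: summable_complex_of_real) (rule summable_LIMSEQ_zero)
  then have "Bseq (\<lambda>n. M n * r ^ n)"
    by (rule convergent_imp_Bseq[OF convergentI])
  then obtain B where "\<And>n. norm (M n * r ^ n) \<le> B"
    by (auto simp: Bseq_def)
  show ?thesis
  proof (rule that[of "1 / (q * r)" B])
    show "1 / q \<le> 1 / (q * r)"
      using r \<rho> E_radius_le_1 q_pos \<open>0 < r\<close> by (simp add: field_simps)
    show "1 / (q * r) < 1"
      using r q_pos by (simp add: field_simps)
    show "\<bar>M n\<bar> \<le> B * (q * (1 / (q * r))) ^ n" for n
      using \<open>norm (M n * r ^ n) \<le> B\<close> \<open>0 < r\<close> q_pos by (simp add: abs_mult power_divide field_simps)
    have "(\<lambda>n. of_real (M n) * of_real (1 / q) ^ n) sums ((1 - of_real q * of_real (1 / q)) / W (of_real (1 / q)))"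
      using \<rho> \<open>0 < r\<close> r q_pos by (intro M_series_sums nonzero) (simp_all add: norm_divide)
    then have "(\<lambda>n. complex_of_real (M n / q ^ n)) sums complex_of_real 0"
      using q_pos by (simp add: power_divide)
    then show "(\<lambda>n. M n / q ^ n) sums 0"
      by (simp only: sums_of_real_iff)
  qed
qed

lemma abs_R_sum_le:
  assumes "1 / q \<le> t" and partial_sums: "\<And>N. \<bar>\<Sum>i\<le>N. M i / q ^ i\<bar> \<le> C * t ^ N"
  shows "\<bar>R_sum deg q n m\<bar> \<le> C * t ^ n * real (Suc n) ^ card {P. deg P \<le> m}"
proof -
  define T where "T = {P. deg P \<le> m}"
  have "0 < t"
    using assms(1) q_pos by (meson divide_pos_pos less_le_trans zero_less_one)
  have "0 \<le> C"
    using partial_sums[of 0] by simp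
  have "\<bar>R_sum deg q n m\<bar> \<le> (\<Sum>j\<le>n. \<bar>smooth_count T j / q ^ j * (\<Sum>i\<le>n - j. M i / q ^ i)\<bar>)"
    unfolding R_sum_eq_convolution T_def by (rule sum_abs)
  also have "\<dots> \<le> (\<Sum>j\<le>n. C * t ^ n * smooth_count T j)"
  proof (rule sum_mono)
    fix j assume "j \<in> {..n}"
    have "(1 / q) ^ j \<le> t ^ j"
      using assms(1) q_pos by (intro power_mono) auto
    have "0 \<le> smooth_count T j"
      by (simp add: smooth_count_def)
    have "\<bar>smooth_count T j / q ^ j * (\<Sum>i\<le>n - j. M i / q ^ i)\<bar> =
        smooth_count T j * (1 / q) ^ j * \<bar>\<Sum>i\<le>n - j. M i / q ^ i\<bar>"
      using \<open>0 \<le> smooth_count T j\<close> q_pos by (simp add: abs_mult power_one_over)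
    also have "\<dots> \<le> smooth_count T j * t ^ j * (C * t ^ (n - j))"
      using \<open>(1 / q) ^ j \<le> t ^ j\<close> partial_sums[of "n - j"] \<open>0 \<le> smooth_count T j\<close> \<open>0 < t\<close>
      by (intro mult_mono mult_left_mono) auto
    also have "\<dots> = C * t ^ n * smooth_count T j"
      using \<open>j \<in> {..n}\<close> by (simp add: mult_ac flip: power_add)
    finally show "\<bar>smooth_count T j / q ^ j * (\<Sum>i\<le>n - j. M i / q ^ i)\<bar> \<le> C * t ^ n * smooth_count T j" .
  qed
  also have "\<dots> = C * t ^ n * (\<Sum>j\<le>n. smooth_count T j)"
    by (simp add: sum_distrib_left)
  also have "\<dots> \<le> C * t ^ n * real (Suc n) ^ card T"
    using \<open>0 \<le> C\<close> \<open>0 < t\<close> unfolding T_def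
    by (intro mult_left_mono sum_smooth_count_le finite_primes_deg_le) simp
  finally show ?thesis
    by (simp add: T_def)
qed

lemma R_sum_exponential_bound:
  assumes "Z_cont_nonzero_at deg q (- 1 / complex_of_real q)"
  obtains \<eta> C where "0 \<le> \<eta>" and "\<eta> < 1" and "0 \<le> C"
    and "\<And>n m. \<bar>R_sum deg q n m\<bar> \<le> C * q powr ((\<eta> - 1) * real n) * real (Suc n) ^ card {P. deg P \<le> m}"
proof -
  obtain t B where t: "1 / q \<le> t" "t < 1" and M_le: "\<And>n. \<bar>M n\<bar> \<le> B * (q * t) ^ n"
    and M_sums: "(\<lambda>n. M n / q ^ n) sums 0"
    using M_exponential_decay[OF assms] by blast
  have "0 < t"
    using t(1) q_pos by (meson divide_pos_pos less_le_trans zero_less_one)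
  have "0 \<le> B"
    using M_le[of 0] by simp
  have "\<bar>M i / q ^ i\<bar> \<le> B * t ^ i" for i
    using M_le[of i] q_pos by (simp add: abs_divide power_mult_distrib divide_le_eq mult_ac)
  then have "\<bar>\<Sum>i\<le>N. M i / q ^ i\<bar> \<le> B * t / (1 - t) * t ^ N" for N
    using M_sums \<open>0 < t\<close> t(2) by (intro abs_partial_sum_le_if_sums_zero) auto
  then have R_le: "\<bar>R_sum deg q n m\<bar> \<le> B * t / (1 - t) * t ^ n * real (Suc n) ^ card {P. deg P \<le> m}" for n m
    by (rule abs_R_sum_le[OF t(1)])
  have "t ^ n = q powr (log q t * real n)" for n
    using \<open>0 < t\<close> q_gt_1 by (simp add: powr_powr[symmetric] powr_realpow)
  moreover have "-1 \<le> log q t"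
    using t(1) \<open>0 < t\<close> q_gt_1 by (simp add: le_log_iff powr_minus_divide)
  moreover have "log q t < 0"
    using t(2) \<open>0 < t\<close> q_gt_1 by simp
  ultimately show ?thesis
    using R_le \<open>0 < t\<close> t(2) \<open>0 \<le> B\<close> by (intro that[of "1 + log q t" "B * t / (1 - t)"]) auto
qed

lemma card_primes_deg_le_bound: "real (card {P. deg P \<le> m}) \<le> K * ((real m + 1) * q ^ m)"
proof -
  have "real (card {P. deg P \<le> m}) \<le> (\<Sum>d\<le>m. G d)"
    by (rule card_primes_deg_le)
  also have "\<dots> \<le> (\<Sum>d\<le>m. K * q ^ m)"
  proof (rule sum_mono)
    fix d assume "d \<in> {..m}"
    then have "q ^ d \<le> q ^ m"
      using q_gt_1 by (intro power_increasing) auto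
    then show "G d \<le> K * q ^ m"
      using G_le[of d] K_pos by (meson less_imp_le mult_left_mono order_trans)
  qed
  finally show ?thesis
    by (simp add: ac_simps)
qed

lemma q_power_le_ln_powr:
  assumes "1 \<le> ln x" and "real m \<le> ln (ln x)"
  shows "q ^ m \<le> ln x powr ln q"
proof -
  have "q ^ m = exp (real m * ln q)"
    using q_pos by (simp add: exp_of_nat_mult exp_ln)
  also have "\<dots> \<le> exp (ln (ln x) * ln q)"
    using assms(2) q_gt_1 by (simp add: mult_right_mono)
  also have "\<dots> = ln x powr ln q"
    using assms(1) by (simp add: powr_def mult.commute)
  finally show ?thesis .
qed

lemma smooth_factor_le_q_powr:
  assumes "\<epsilon> > 0"
  obtains N where "\<And>n m. n \<ge> N \<Longrightarrow> real m \<le> ln (ln (real n)) \<Longrightarrow>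
    real (Suc n) ^ card {P. deg P \<le> m} \<le> q powr (\<epsilon> * real n)"
proof -
  define a where "a = ln q"
  have "a > 0"
    using q_gt_1 by (simp add: a_def)
  have "\<forall>\<^sub>F x in at_top. K * ((ln (ln x) + 1) * ln x powr a) * ln (x + 1) \<le> \<epsilon> * a * x"
    using assms \<open>a > 0\<close> K_pos by real_asymp
  then obtain X where X: "\<And>x. x \<ge> X \<Longrightarrow> K * ((ln (ln x) + 1) * ln x powr a) * ln (x + 1) \<le> \<epsilon> * a * x"
    unfolding eventually_at_top_linorder by blast
  show ?thesis
  proof (rule that[of "max 3 (nat \<lceil>X\<rceil>)"])
    fix n m assume n: "max 3 (nat \<lceil>X\<rceil>) \<le> n" and m: "real m \<le> ln (ln (real n))"
    then have "3 \<le> real n" "X \<le> real n"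
      by linarith+
    then have "1 \<le> ln (real n)"
      using exp_le ln_ge_iff[of "real n" 1] by simp
    then have "q ^ m \<le> ln (real n) powr a"
      unfolding a_def using m by (rule q_power_le_ln_powr)
    then have "(real m + 1) * q ^ m \<le> (ln (ln (real n)) + 1) * ln (real n) powr a"
      using m q_pos by (intro mult_mono) auto
    then have "K * ((real m + 1) * q ^ m) * ln (real n + 1) \<le>
        K * ((ln (ln (real n)) + 1) * ln (real n) powr a) * ln (real n + 1)"
      using K_pos by (intro mult_right_mono mult_left_mono) auto
    also have "\<dots> \<le> \<epsilon> * a * real n"
      using X \<open>X \<le> real n\<close> by simp
    finally have exponent: "K * ((real m + 1) * q ^ m) * ln (real n + 1) \<le> \<epsilon> * a * real n" .
    have "real (Suc n) ^ card {P. deg P \<le> m} = exp (real (card {P. deg P \<le> m}) * ln (real n + 1))"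
      by (simp add: exp_of_nat_mult add.commute)
    also have "\<dots> \<le> exp (K * ((real m + 1) * q ^ m) * ln (real n + 1))"
      using mult_right_mono[OF card_primes_deg_le_bound[of m], of "ln (real n + 1)"] by simp
    also have "\<dots> \<le> exp (\<epsilon> * a * real n)"
      using exponent by simp
    also have "\<dots> = q powr (\<epsilon> * real n)"
      using q_pos by (simp add: powr_def a_def mult_ac)
    finally show "real (Suc n) ^ card {P. deg P \<le> m} \<le> q powr (\<epsilon> * real n)" .
  qed
qed

theorem R_sum_estimate:
  assumes "Z_cont_nonzero_at deg q (- 1 / complex_of_real q)"
  shows "\<exists>\<eta>. 0 \<le> \<eta> \<and> \<eta> < 1 \<and>
           (\<forall>\<epsilon>>0. \<exists>C N. \<forall>n\<ge>N. \<forall>m::nat. real m \<le> ln (ln (real n)) \<longrightarrow>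
              \<bar>R_sum deg q n m\<bar> \<le> C * q powr ((\<eta> - 1 + \<epsilon>) * real n))"
proof -
  obtain \<eta> C where \<eta>: "0 \<le> \<eta>" "\<eta> < 1" and "0 \<le> C"
    and R_le: "\<And>n m. \<bar>R_sum deg q n m\<bar> \<le> C * q powr ((\<eta> - 1) * real n) * real (Suc n) ^ card {P. deg P \<le> m}"
    using R_sum_exponential_bound[OF assms] by blast
  have "\<exists>C N. \<forall>n\<ge>N. \<forall>m::nat. real m \<le> ln (ln (real n)) \<longrightarrow>
      \<bar>R_sum deg q n m\<bar> \<le> C * q powr ((\<eta> - 1 + \<epsilon>) * real n)" if "\<epsilon> > 0" for \<epsilon>
  proof -
    obtain N where N: "\<And>n m. n \<ge> N \<Longrightarrow> real m \<le> ln (ln (real n)) \<Longrightarrow>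
        real (Suc n) ^ card {P. deg P \<le> m} \<le> q powr (\<epsilon> * real n)"
      using smooth_factor_le_q_powr[OF \<open>\<epsilon> > 0\<close>] by blast
    have "\<bar>R_sum deg q n m\<bar> \<le> C * q powr ((\<eta> - 1 + \<epsilon>) * real n)"
      if "n \<ge> N" and "real m \<le> ln (ln (real n))" for n m
    proof -
      have "\<bar>R_sum deg q n m\<bar> \<le> C * q powr ((\<eta> - 1) * real n) * real (Suc n) ^ card {P. deg P \<le> m}"
        by (rule R_le)
      also have "\<dots> \<le> C * q powr ((\<eta> - 1) * real n) * q powr (\<epsilon> * real n)"
        using N[OF that] \<open>0 \<le> C\<close> by (intro mult_left_mono) simp_all
      also have "\<dots> = C * q powr ((\<eta> - 1 + \<epsilon>) * real n)"
        by (simp add: powr_add[symmetric] algebra_simps)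
      finally show ?thesis .
    qed
    then show ?thesis
      by blast
  qed
  with \<eta> show ?thesis
    by blast
qed

end

theorem lemma2p8:
  fixes deg :: "'p \<Rightarrow> nat" and c q :: real
  assumes "arith_semigroup deg"
    and "c > 0" and "q > 1"
    and "axiom_A_sharp deg c q"
    and "Z_cont_nonzero_at deg q (- 1 / complex_of_real q)"
  shows "\<exists>\<eta>. 0 \<le> \<eta> \<and> \<eta> < 1 \<and>
           (\<forall>\<epsilon>>0. \<exists>C N. \<forall>n\<ge>N. \<forall>m::nat. real m \<le> ln (ln (real n)) \<longrightarrow>
              \<bar>R_sum deg q n m\<bar> \<le> C * q powr ((\<eta> - 1 + \<epsilon>) * real n))"
proof -
  obtain \<eta>0 C0 where "0 \<le> \<eta>0" "\<eta>0 < 1"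
    and "\<And>n. \<bar>real (G_count deg n) - c * q ^ n\<bar> \<le> C0 * q powr (\<eta>0 * real n)"
    using assms(4) unfolding axiom_A_sharp_def by blast
  then interpret A_sharp_semigroup deg c q \<eta>0 C0
    using assms by unfold_locales auto
  show ?thesis
    by (rule R_sum_estimate[OF assms(5)])
qed

end
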